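(* Let $n\ge1$, $p\ge1$, $m\ge p$, $q\in\{1,2,\ldots\}$, $\alpha>0$ and $N=n+p+qm+1$. For $s\ge0$ let $\mu_q(s)$ be the positive solution of $N\mu^q-ns\mu^{q-1}-q\alpha^q=0$. Then $\mu_q(s)$ is well defined (the positive solution exists and is unique), and: (i) if $S=V\operatorname{diag}(s_1,\ldots,s_p)V^\top$ with $V$ orthogonal, then the MAP estimator with prior parameters $(\alpha I_p,m,q)$ equals $\hat\Sigma=V\operatorname{diag}(\mu_q(s_1),\ldots,\mu_q(s_p))V^\top$; (ii) $\mu_q(0)=\alpha(q/N)^{1/q}$ and $\mu_q(s)\ge\alpha(q/N)^{1/q}$ for all $s\ge0$; (iii) $\mu_q(s)\ge \frac nN s$ for all $s\ge0$; (iv) $\lim_{s\to\infty}\mu_q(s)/s=n/N$.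
   Context: Data $X_1,\ldots,X_n\in\mathbb R^p$, $\bar X=\frac1n\sum_iX_i$, $S=\frac1n\sum_i(X_i-\bar X)(X_i-\bar X)^\top$ (symmetric positive semidefinite). For $\Psi$ positive definite, $m\ge p$ and $q$ a positive integer, the MAP estimator $\hat\Sigma$ is the $\Sigma$-component of the unique maximizer over $\mu\in\mathbb R^p$, $\Sigma$ positive definite, of $|\Sigma|^{-n/2}\exp(-\tfrac12\sum_i(X_i-\mu)^\top\Sigma^{-1}(X_i-\mu))\cdot\exp(-\tfrac12\operatorname{tr}((\Psi^{-1/2}\Sigma\Psi^{-1/2})^{-q}))|\Sigma|^{-(qm+p+1)/2}$, where $\Psi^{1/2}$ is the positive definite square root. *)

theory Defs
  imports "HOL-Analysis.Analysis"
begin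

text \<open>Matrices are of type real^'p^'p (dimension p = CARD('p)). Note that the operation
  * on this type is entrywise, so matrix powers are defined via the matrix product **.\<close>

definition mat_pow :: "real^'p^'p \<Rightarrow> nat \<Rightarrow> real^'p^'p" where
  "mat_pow A k = (((**) A) ^^ k) (mat 1)"

definition sym_mat :: "real^'p^'p \<Rightarrow> bool" where
  "sym_mat A \<longleftrightarrow> transpose A = A"

definition pos_def :: "real^'p^'p \<Rightarrow> bool" where
  "pos_def A \<longleftrightarrow> sym_mat A \<and> (\<forall>x. x \<noteq> 0 \<longrightarrow> x \<bullet> (A *v x) > 0)"

definition outer :: "real^'p \<Rightarrow> real^'p \<Rightarrow> real^'p^'p" where
  "outer u v = (\<chi> i j. u $ i * v $ j)"

definition diag_mat :: "('p \<Rightarrow> real) \<Rightarrow> real^'p^'p" where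
  "diag_mat d = (\<chi> i j. if i = j then d i else 0)"

text \<open>Data X_0, ..., X_{n-1} (indexing from 0).\<close>
definition sample_mean :: "nat \<Rightarrow> (nat \<Rightarrow> real^'p) \<Rightarrow> real^'p" where
  "sample_mean n X = (1 / real n) *\<^sub>R (\<Sum>i<n. X i)"

definition sample_cov :: "nat \<Rightarrow> (nat \<Rightarrow> real^'p) \<Rightarrow> real^'p^'p" where
  "sample_cov n X = (1 / real n) *\<^sub>R
     (\<Sum>i<n. outer (X i - sample_mean n X) (X i - sample_mean n X))"

definition mat_sqrt :: "real^'p^'p \<Rightarrow> real^'p^'p" where
  "mat_sqrt Psi = (THE R. pos_def R \<and> R ** R = Psi)"

text \<open>Posterior objective (likelihood times prior kernel).\<close>
definition map_objective ::
  "nat \<Rightarrow> (nat \<Rightarrow> real^'p) \<Rightarrow> real^'p^'p \<Rightarrow> real \<Rightarrow> nat \<Rightarrow> real^'p \<Rightarrow> real^'p^'p \<Rightarrow> real" where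
  "map_objective n X Psi m q mu Sg =
     (let Ri = matrix_inv (mat_sqrt Psi);
          SI = matrix_inv Sg
      in det Sg powr (- real n / 2)
         * exp (- (1/2) * (\<Sum>i<n. (X i - mu) \<bullet> (SI *v (X i - mu))))
         * exp (- (1/2) * trace (mat_pow (matrix_inv (Ri ** Sg ** Ri)) q))
         * det Sg powr (- (real q * m + real CARD('p) + 1) / 2))"

definition is_MAP_Sigma ::
  "nat \<Rightarrow> (nat \<Rightarrow> real^'p) \<Rightarrow> real^'p^'p \<Rightarrow> real \<Rightarrow> nat \<Rightarrow> real^'p^'p \<Rightarrow> bool" where
  "is_MAP_Sigma n X Psi m q Sh \<longleftrightarrow>
     (\<exists>muh. pos_def Sh \<and>
        (\<forall>mu Sg. pos_def Sg \<longrightarrow>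
            map_objective n X Psi m q mu Sg \<le> map_objective n X Psi m q muh Sh) \<and>
        (\<forall>mu Sg. pos_def Sg \<and>
            map_objective n X Psi m q mu Sg = map_objective n X Psi m q muh Sh
            \<longrightarrow> mu = muh \<and> Sg = Sh))"

definition mu_eq :: "real \<Rightarrow> nat \<Rightarrow> nat \<Rightarrow> real \<Rightarrow> real \<Rightarrow> real \<Rightarrow> bool" where
  "mu_eq N n q alpha s x \<longleftrightarrow> N * x ^ q - real n * s * x ^ (q - 1) - real q * alpha ^ q = 0"

definition mu_q :: "real \<Rightarrow> nat \<Rightarrow> nat \<Rightarrow> real \<Rightarrow> real \<Rightarrow> real" where
  "mu_q N n q alpha s = (THE x. x > 0 \<and> mu_eq N n q alpha s x)"

end

theory Submission
  imports Defs
begin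

(* With Psi = alpha I the prior term is alpha^q tr(Omega^q) for the precision matrix
   Omega = Sigma^-1, and after the usual decomposition of the likelihood around the sample
   mean the log posterior becomes
     (N ln det Omega - n tr(Omega S) - alpha^q tr(Omega^q) - n (xbar-mu)' Omega (xbar-mu)) / 2.
   So the MAP mean is xbar and it remains to maximise the precision part.  In the eigenbasis V
   of S it is bounded using Hadamard's inequality  ln det M <= sum ln M_ii  and the bound
   (M^q)_ii >= (M_ii)^q, both equalities for diagonal M; this reduces the problem to the
   scalar concave problems  max_t N ln t - n s_i t - alpha^q t^q, whose critical point
   t = 1/mu is exactly the root mu_q(s_i) of the defining equation. *)

section \<open>The scalar equation defining \<open>\<mu>\<^sub>q\<close>\<close>

lemma power_eq_pred_mult: "0 < (q::nat) \<Longrightarrow> (x::real) ^ q = x ^ (q - 1) * x"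
  using power_minus_mult[of q x] by simp

lemma mu_eq_factored:
  assumes "q \<ge> 1"
  shows "mu_eq N n q alpha s x \<longleftrightarrow> x ^ (q - 1) * (N * x - real n * s) = real q * alpha ^ q"
  using power_eq_pred_mult[of q x] assms unfolding mu_eq_def by (simp add: algebra_simps)

lemma mu_eq_root_bounds:
  fixes N alpha s x c :: real and n q :: nat
  assumes q: "q \<ge> 1" and a: "alpha > 0" and N: "N > 0" and s: "s \<ge> 0"
    and c: "c > 0" "N * c ^ q = real q * alpha ^ q"
    and x: "x > 0" "mu_eq N n q alpha s x"
  shows "c \<le> x" "x \<le> c + real n * s / N" "real n * s / N < x"
proof -
  have e: "x ^ (q - 1) * (N * x - real n * s) = real q * alpha ^ q"
    using x(2) q by (simp add: mu_eq_factored)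
  have xq: "x ^ (q - 1) > 0" using x by simp
  have pos: "N * x - real n * s > 0"
  proof -
    have "real q * alpha ^ q > 0" using q a by simp
    thus ?thesis using e xq by (metis zero_less_mult_pos)
  qed
  then show "real n * s / N < x" using N by (simp add: field_simps)
  show "c \<le> x"
  proof (rule ccontr)
    assume "\<not> c \<le> x"
    have "x ^ (q - 1) * (N * x - real n * s) \<le> x ^ (q - 1) * (N * x)"
      using xq s by (intro mult_left_mono) auto
    also have "\<dots> = N * x ^ q" using power_eq_pred_mult[of q x] q by simp
    also have "\<dots> < N * c ^ q" using \<open>\<not> c \<le> x\<close> x N q
      by (intro mult_strict_left_mono power_strict_mono) auto
    finally show False using e c by simp
  qed
  show "x \<le> c + real n * s / N"
  proof (rule ccontr)
    assume "\<not> ?thesis"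
    hence h: "N * x - real n * s > N * c" using N by (simp add: field_simps)
    have "N * c ^ q = c ^ (q - 1) * (N * c)" using power_eq_pred_mult[of q c] q by simp
    also have "\<dots> < c ^ (q - 1) * (N * x - real n * s)"
      using h c by (intro mult_strict_left_mono) auto
    also have "\<dots> \<le> x ^ (q - 1) * (N * x - real n * s)"
      using \<open>c \<le> x\<close> c pos by (intro mult_right_mono power_mono) auto
    finally show False using e c by simp
  qed
qed

text \<open>Existence by the intermediate value theorem on \<open>[c, c + n s / N]\<close>.\<close>
lemma mu_eq_root_exists:
  fixes N alpha s c :: real and n q :: nat
  assumes q: "q \<ge> 1" and N: "N > 0" and s: "s \<ge> 0"
    and c: "c > 0" "N * c ^ q = real q * alpha ^ q"
  shows "\<exists>x. x > 0 \<and> mu_eq N n q alpha s x"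
proof -
  define h where "h x = N * x ^ q - real n * s * x ^ (q - 1) - real q * alpha ^ q" for x
  define b where "b = c + real n * s / N"
  have cb: "c \<le> b" unfolding b_def using N s by simp
  have hc: "h c \<le> 0" unfolding h_def using c s by simp
  have "N * c ^ q = c ^ (q - 1) * (N * c)" using power_eq_pred_mult[of q c] q by simp
  also have "\<dots> \<le> b ^ (q - 1) * (N * c)"
    using cb c N by (intro mult_right_mono power_mono) auto
  also have "N * c = N * b - real n * s" unfolding b_def using N by (simp add: field_simps)
  finally have "N * c ^ q \<le> b ^ (q - 1) * (N * b - real n * s)" .
  hence hb: "0 \<le> h b"
    unfolding h_def using power_eq_pred_mult[of q b] q c by (simp add: algebra_simps)
  obtain x where "c \<le> x" "h x = 0"
    using IVT[of h c 0 b] hc hb cb unfolding h_def by (auto intro!: continuous_intros)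
  thus ?thesis using c unfolding mu_eq_def h_def by (intro exI[of _ x]) auto
qed

text \<open>Uniqueness: on positive roots \<open>x\<^sup>q\<^sup>-\<^sup>1 (N x - n s)\<close> is strictly increasing.\<close>
lemma mu_eq_root_unique:
  fixes N alpha s :: real and n q :: nat
  assumes q: "q \<ge> 1" and a: "alpha > 0" and N: "N > 0"
    and x: "x > 0" "mu_eq N n q alpha s x" and y: "y > 0" "mu_eq N n q alpha s y"
  shows "x = y"
proof -
  have e: "z ^ (q - 1) * (N * z - real n * s) = real q * alpha ^ q"
    if "mu_eq N n q alpha s z" for z
    using that q by (simp add: mu_eq_factored)
  have qa: "real q * alpha ^ q > 0" using q a by simp
  have pos: "N * z - real n * s > 0" if "z > 0" "mu_eq N n q alpha s z" for z
    using e[OF that(2)] qa that(1) by (metis zero_less_mult_pos zero_less_power)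
  have no_lt: False
    if "u < v" "u > 0" "mu_eq N n q alpha s u" "mu_eq N n q alpha s v" for u v
  proof -
    have "u ^ (q - 1) * (N * u - real n * s) < v ^ (q - 1) * (N * v - real n * s)"
      using that pos[of u] N by (intro mult_le_less_imp_less power_mono) auto
    thus False using e that by simp
  qed
  show ?thesis using no_lt[of x y] no_lt[of y x] x y by (cases "x < y"; cases "y < x") auto
qed

lemma mu_eq_unique_root:
  assumes "q \<ge> 1" "alpha > 0" "N > 0" "s \<ge> 0"
    and "c > 0" "N * c ^ q = real q * alpha ^ q"
  shows "\<exists>!x. x > 0 \<and> mu_eq N n q alpha s x"
  using mu_eq_root_exists[of q N s c alpha n] mu_eq_root_unique[of q alpha N _ n s] assms
  by blast

lemma mu_zero_root:
  fixes N alpha :: real and q :: nat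
  assumes q: "q \<ge> 1" and a: "alpha > 0" and N: "N > 0"
  defines "c \<equiv> alpha * (real q / N) powr (1 / real q)"
  shows "c > 0" "N * c ^ q = real q * alpha ^ q"
proof -
  have qN: "real q / N > 0" using q N by simp
  show "c > 0" unfolding c_def using a qN q by (intro mult_pos_pos) auto
  have "((real q / N) powr (1 / real q)) ^ q = ((real q / N) powr (1 / real q)) powr (real q)"
    by (rule powr_realpow[symmetric]) (use qN q N in simp)
  also have "\<dots> = real q / N" using qN q N by (simp add: powr_powr)
  finally have "c ^ q = alpha ^ q * (real q / N)" unfolding c_def by (simp add: power_mult_distrib)
  thus "N * c ^ q = real q * alpha ^ q" using N by (simp add: field_simps)
qed

lemma mu_q_root:
  assumes q: "q \<ge> 1" and a: "alpha > 0" and N: "N > 0" and s: "s \<ge> 0"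
  shows "mu_q N n q alpha s > 0 \<and> mu_eq N n q alpha s (mu_q N n q alpha s)"
  unfolding mu_q_def
  by (rule theI'[OF mu_eq_unique_root[OF q a N s mu_zero_root[OF q a N]]])

lemma mu_q_bounds:
  fixes N alpha s :: real and n q :: nat
  assumes q: "q \<ge> 1" and a: "alpha > 0" and N: "N > 0" and s: "s \<ge> 0"
  defines "c \<equiv> alpha * (real q / N) powr (1 / real q)"
  shows "c \<le> mu_q N n q alpha s" "mu_q N n q alpha s \<le> c + real n / N * s"
    "real n / N * s \<le> mu_q N n q alpha s"
  using mu_eq_root_bounds[OF q a N s mu_zero_root[OF q a N], where x = "mu_q N n q alpha s"
      and n = n] mu_q_root[OF q a N s, of n]
  unfolding c_def by auto

lemma mu_q_zero:
  assumes q: "q \<ge> 1" and a: "alpha > 0" and N: "N > 0"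
  shows "mu_q N n q alpha 0 = alpha * (real q / N) powr (1 / real q)"
proof -
  note c = mu_zero_root[OF q a N]
  have "mu_eq N n q alpha 0 (alpha * (real q / N) powr (1 / real q))"
    using c(2) by (simp add: mu_eq_def)
  thus ?thesis using mu_q_root[OF q a N order_refl, of n] mu_eq_root_unique[OF q a N] c(1)
    by blast
qed

lemma ratio_tendsto_at_top:
  fixes f :: "real \<Rightarrow> real" and b c :: real
  assumes "\<And>s. s > 0 \<Longrightarrow> b * s \<le> f s \<and> f s \<le> c + b * s"
  shows "((\<lambda>s. f s / s) \<longlongrightarrow> b) at_top"
proof (rule tendsto_sandwich[of "\<lambda>s. b" _ _ "\<lambda>s. b + c / s"])
  show "\<forall>\<^sub>F s in at_top. b \<le> f s / s"
    using eventually_gt_at_top[of 0] by eventually_elim (use assms in \<open>simp add: field_simps\<close>)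
  show "\<forall>\<^sub>F s in at_top. f s / s \<le> b + c / s"
    using eventually_gt_at_top[of 0] by eventually_elim (use assms in \<open>simp add: field_simps\<close>)
  have "((\<lambda>s. c / s) \<longlongrightarrow> 0) at_top"
    by (intro tendsto_divide_0[OF tendsto_const] filterlim_at_top_imp_at_infinity filterlim_ident)
  thus "((\<lambda>s. b + c / s) \<longlongrightarrow> b) at_top"
    using tendsto_add[OF tendsto_const[of b]] by fastforce
qed simp

section \<open>Positive definite matrices\<close>

lemma sym_mat_entry: "sym_mat M \<Longrightarrow> M $ i $ j = M $ j $ i"
  unfolding sym_mat_def by (metis transpose_def vec_lambda_beta)

lemma sym_mat_inner:
  fixes A :: "real^'p^'p"
  assumes "sym_mat A"
  shows "(A *v x) \<bullet> y = x \<bullet> (A *v y)"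
proof -
  have "A *v x = x v* A" by (metis assms sym_mat_def transpose_matrix_vector)
  thus ?thesis by (simp add: dot_lmul_matrix)
qed

lemma quad_form_axis: "axis i 1 \<bullet> (A *v axis i (1::real)) = A $ i $ i"
  unfolding inner_axis' by (simp add: matrix_vector_mult_def axis_def
      mult.commute[of _ "if _ then _ else _"] if_distrib sum.delta cong: if_cong)

lemma pos_def_quad_nonneg: "pos_def A \<Longrightarrow> x \<bullet> (A *v x) \<ge> 0"
  unfolding pos_def_def by (cases "x = 0") (auto simp: less_imp_le)

lemma pos_def_diag_pos: "pos_def M \<Longrightarrow> M $ i $ i > 0"
  using quad_form_axis[of i M] unfolding pos_def_def by (metis axis_eq_0_iff zero_neq_one)

lemma pos_def_kernel:
  fixes A :: "real^'p^'p"
  assumes "pos_def A" "A *v x = 0" shows "x = 0"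
  using assms unfolding pos_def_def by force

lemma pos_def_invertible:
  fixes A :: "real^'p^'p"
  assumes "pos_def A" shows "invertible A"
proof -
  have "inj ((*v) A)"
  proof (rule injI)
    fix x y assume "A *v x = A *v y"
    hence "A *v (x - y) = 0" by (simp add: matrix_vector_mult_diff_distrib)
    thus "x = y" using pos_def_kernel[OF assms, of "x - y"] by simp
  qed
  thus ?thesis using matrix_left_invertible_injective invertible_left_inverse by blast
qed

text \<open>The library defines \<open>matrix_inv\<close> by choice; these are its two defining properties
  and its uniqueness.\<close>
lemma matrix_inv_props:
  fixes A :: "real^'p^'p"
  assumes "invertible A"
  shows "A ** matrix_inv A = mat 1" "matrix_inv A ** A = mat 1"
proof -
  have "\<exists>A'. A ** A' = mat 1 \<and> A' ** A = mat 1" using assms by (simp add: invertible_def)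
  hence "A ** matrix_inv A = mat 1 \<and> matrix_inv A ** A = mat 1"
    unfolding matrix_inv_def by (rule someI_ex)
  thus "A ** matrix_inv A = mat 1" "matrix_inv A ** A = mat 1" by auto
qed

lemma matrix_inv_unique:
  fixes A B :: "real^'p^'p"
  assumes "A ** B = mat 1"
  shows "matrix_inv A = B"
proof -
  have "B ** A = mat 1" using assms matrix_left_right_inverse by blast
  hence inv: "invertible A" using assms by (auto simp: invertible_def)
  have "matrix_inv A = matrix_inv A ** (A ** B)" using assms by simp
  also have "\<dots> = (matrix_inv A ** A) ** B" by (simp add: matrix_mul_assoc)
  finally have "matrix_inv A = (matrix_inv A ** A) ** B" .
  thus ?thesis using matrix_inv_props[OF inv] by simp
qed

lemma matrix_inv_inv:
  fixes A :: "real^'p^'p"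
  assumes "pos_def A" shows "matrix_inv (matrix_inv A) = A"
  using matrix_inv_unique[OF matrix_inv_props(2)[OF pos_def_invertible[OF assms]]] .

lemma pos_def_matrix_inv:
  fixes A :: "real^'p^'p"
  assumes A: "pos_def A"
  shows "pos_def (matrix_inv A)"
proof -
  let ?B = "matrix_inv A"
  note I = matrix_inv_props[OF pos_def_invertible[OF A]]
  have "transpose ?B ** A = mat 1"
    using arg_cong[OF I(1), of transpose] A
    by (simp add: matrix_transpose_mul sym_mat_def pos_def_def)
  hence "transpose ?B = ?B"
    using I(1) by (metis matrix_mul_assoc matrix_mul_lid matrix_mul_rid)
  moreover have "x \<bullet> (?B *v x) > 0" if "x \<noteq> 0" for x
  proof -
    have Ay: "A *v (?B *v x) = x" using I(1) by (simp add: matrix_vector_mul_assoc)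
    hence "?B *v x \<noteq> 0" using that by auto
    hence "(?B *v x) \<bullet> (A *v (?B *v x)) > 0" using A by (simp add: pos_def_def)
    thus ?thesis using Ay by (simp add: inner_commute)
  qed
  ultimately show ?thesis by (simp add: pos_def_def sym_mat_def)
qed

lemma pos_def_congruence:
  fixes A V :: "real^'p^'p"
  assumes A: "pos_def A" and V: "invertible V"
  shows "pos_def (transpose V ** A ** V)"
proof -
  have "sym_mat (transpose V ** A ** V)"
    using A by (simp add: pos_def_def sym_mat_def matrix_transpose_mul matrix_mul_assoc)
  moreover have "x \<bullet> ((transpose V ** A ** V) *v x) > 0" if "x \<noteq> 0" for x
  proof -
    have "V *v x \<noteq> 0"
      using that inj_matrix_vector_mult[OF V] by (metis injD matrix_vector_mult_0_right)
    moreover have "x \<bullet> ((transpose V ** A ** V) *v x) = (V *v x) \<bullet> (A *v (V *v x))"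
      by (metis dot_lmul_matrix matrix_vector_mul_assoc transpose_transpose
          vector_transpose_matrix)
    ultimately show ?thesis using A by (simp add: pos_def_def)
  qed
  ultimately show ?thesis by (simp add: pos_def_def)
qed

lemma pos_def_cauchy_schwarz:
  fixes M :: "real^'p^'p"
  assumes M: "pos_def M"
  shows "(x \<bullet> (M *v y))\<^sup>2 \<le> (x \<bullet> (M *v x)) * (y \<bullet> (M *v y))"
proof (cases "y = 0")
  case True thus ?thesis by simp
next
  case False
  let ?b = "x \<bullet> (M *v y)" and ?a = "x \<bullet> (M *v x)" and ?c = "y \<bullet> (M *v y)"
  have sy: "y \<bullet> (M *v x) = ?b"
    using sym_mat_inner[of M y x] M by (simp add: inner_commute pos_def_def)
  have c: "?c > 0" using M False by (simp add: pos_def_def)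
  define t where "t = - ?b / ?c"
  have "0 \<le> (x + t *\<^sub>R y) \<bullet> (M *v (x + t *\<^sub>R y))" using pos_def_quad_nonneg[OF M] .
  also have "\<dots> = ?a + 2 * t * ?b + t\<^sup>2 * ?c"
    using sy by (simp add: matrix_vector_right_distrib matrix_vector_mult_scaleR
        inner_add_left inner_add_right power2_eq_square algebra_simps)
  also have "\<dots> = ?a - ?b\<^sup>2 / ?c" unfolding t_def using c
    by (simp add: field_simps power2_eq_square)
  finally show ?thesis using c by (simp add: field_simps)
qed

section \<open>Hadamard's inequality\<close>

text \<open>One step of symmetric Gaussian elimination on pivot \<open>k\<close> is the congruence \<open>L M L\<^sup>T\<close> with the
  unit lower triangular matrix \<open>L = I - u e\<^sub>k\<^sup>T\<close> (where \<open>u\<^sub>k = 0\<close>); it clears row and column \<open>k\<close>,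
  keeps the determinant and positive definiteness, and can only decrease diagonal entries.\<close>
definition shear_mat :: "real^'p \<Rightarrow> 'p \<Rightarrow> real^'p^'p" where
  "shear_mat u k = (\<chi> i a. (if a = i then 1 else 0) - (if a = k then u$i else 0))"

definition sym_elim :: "real^'p^'p \<Rightarrow> 'p \<Rightarrow> real^'p^'p" where
  "sym_elim M k = (\<chi> i j. if i = k \<and> j = k then M$k$k else if i = k \<or> j = k then 0
                      else M$i$j - M$i$k * M$k$j / M$k$k)"

lemma shear_mat_left: "(shear_mat u k ** A) $ i $ b = A $ i $ b - u $ i * A $ k $ b"
proof -
  have "(shear_mat u k ** A) $ i $ b
      = (\<Sum>a\<in>UNIV. (if a = i then A$a$b else 0) - (if a = k then u$i * A$a$b else 0))"
    unfolding shear_mat_def matrix_matrix_mult_def by (auto intro!: sum.cong simp: algebra_simps)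
  thus ?thesis by (simp add: sum_subtractf)
qed

lemma shear_mat_right:
  "(A ** transpose (shear_mat u k)) $ i $ j = A $ i $ j - u $ j * A $ i $ k"
proof -
  have "(A ** transpose (shear_mat u k)) $ i $ j
      = (\<Sum>a\<in>UNIV. (if a = j then A$i$a else 0) - (if a = k then u$j * A$i$a else 0))"
    unfolding shear_mat_def matrix_matrix_mult_def transpose_def
    by (auto intro!: sum.cong simp: algebra_simps)
  thus ?thesis by (simp add: sum_subtractf)
qed

text \<open>Adding to row \<open>k\<close> of the identity a combination of the other rows keeps the
  determinant equal to one.\<close>
lemma det_shear_mat:
  fixes u :: "real^'p"
  assumes "u $ k = 0"
  shows "det (shear_mat u k) = 1"
proof -
  have row1: "row j (mat 1 :: real^'p^'p) = axis j 1" for j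
    by (simp add: row_def mat_def axis_def vec_eq_iff)
  have "- u = (\<Sum>j\<in>UNIV - {k}. (- u $ j) *s row j (mat 1 :: real^'p^'p))"
  proof (subst vec_eq_iff, intro allI)
    fix r
    have "(\<Sum>j\<in>UNIV - {k}. (- u $ j) *s row j (mat 1 :: real^'p^'p)) $ r
        = (\<Sum>j\<in>UNIV - {k}. (if j = r then - u $ j else 0))"
      unfolding sum_component by (intro sum.cong) (auto simp: row1 axis_def)
    also have "\<dots> = - u $ r" using assms by (subst sum.delta) auto
    finally show "(- u) $ r = (\<Sum>j\<in>UNIV - {k}. (- u $ j) *s row j (mat 1 :: real^'p^'p)) $ r"
      by simp
  qed
  also have "\<dots> \<in> vec.span {row j (mat 1 :: real^'p^'p) |j. j \<noteq> k}"
    by (intro vec.span_sum vec.span_scale vec.span_base) auto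
  finally have span: "- u \<in> vec.span {row j (mat 1 :: real^'p^'p) |j. j \<noteq> k}" .
  have "transpose (shear_mat u k) = (\<chi> r. if r = k then row k (mat 1) + - u else row r (mat 1))"
    using assms by (auto simp: vec_eq_iff shear_mat_def transpose_def row_def mat_def)
  hence "det (transpose (shear_mat u k)) = det (mat 1 :: real^'p^'p)"
    using det_row_span[OF span] by simp
  thus ?thesis by simp
qed

lemma sym_elim_as_congruence:
  fixes M :: "real^'p^'p"
  assumes M: "sym_mat M" "M$k$k \<noteq> 0"
  defines "u \<equiv> (\<chi> i. if i = k then 0 else M$i$k / M$k$k)"
  shows "sym_elim M k = shear_mat u k ** M ** transpose (shear_mat u k)"
proof -
  have "sym_elim M k $ i $ j = (M$i$j - u$i * M$k$j) - u$j * (M$i$k - u$i * M$k$k)" for i j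
    using M(2) sym_mat_entry[OF M(1), of j k]
    by (cases "i = k"; cases "j = k") (simp_all add: sym_elim_def u_def field_simps)
  thus ?thesis by (simp add: vec_eq_iff shear_mat_left shear_mat_right)
qed

text \<open>Elimination is a congruence by a matrix of determinant one.\<close>
lemma sym_elim_pos_def_det:
  fixes M :: "real^'p^'p"
  assumes M: "pos_def M"
  shows "pos_def (sym_elim M k)" "det (sym_elim M k) = det M"
proof -
  define u where "u = (\<chi> i. if i = k then 0 else M$i$k / M$k$k)"
  let ?L = "shear_mat u k"
  have E: "sym_elim M k = transpose (transpose ?L) ** M ** transpose ?L"
    using sym_elim_as_congruence[of M k] pos_def_diag_pos[OF M, of k] M
    unfolding u_def by (simp add: pos_def_def)
  have dL: "det ?L = 1" by (rule det_shear_mat) (simp add: u_def)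
  show "det (sym_elim M k) = det M" unfolding E by (simp add: det_mul dL)
  have "invertible (transpose ?L)" using dL by (simp add: invertible_det_nz)
  thus "pos_def (sym_elim M k)" unfolding E by (rule pos_def_congruence[OF M])
qed

text \<open>The diagonal decreases by \<open>M\<^sub>i\<^sub>k\<^sup>2 / M\<^sub>k\<^sub>k \<ge> 0\<close>.\<close>
lemma sym_elim_diag_le:
  fixes M :: "real^'p^'p"
  assumes M: "pos_def M"
  shows "sym_elim M k $ i $ i \<le> M $ i $ i"
  using pos_def_diag_pos[OF M, of k] sym_mat_entry[of M k i] M
  by (auto simp: sym_elim_def pos_def_def field_simps)

lemma sym_elim_diag_eq:
  fixes M :: "real^'p^'p"
  assumes M: "pos_def M" and eq: "\<And>i. sym_elim M k $ i $ i = M $ i $ i"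
  shows "sym_elim M k = M"
proof -
  have s: "M$i$j = M$j$i" for i j using M sym_mat_entry by (auto simp: pos_def_def)
  have kk: "M$k$k > 0" using pos_def_diag_pos[OF M] .
  have "M$i$k = 0" if "i \<noteq> k" for i
  proof -
    have "M$i$k * M$k$i / M$k$k = 0" using eq[of i] that by (simp add: sym_elim_def)
    thus ?thesis using kk s[of k i] by simp
  qed
  hence "sym_elim M k $ i $ j = M $ i $ j" for i j
    using s[of k j] by (cases "i = k"; cases "j = k") (auto simp: sym_elim_def)
  thus ?thesis by (simp add: vec_eq_iff)
qed

text \<open>Eliminating the pivots of \<open>J\<close> one after another clears all off-diagonal entries in the
  rows and columns of \<open>J\<close>; entries cleared earlier stay zero.\<close>
lemma sym_elim_diagonalize:
  fixes M :: "real^'p^'p"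
  assumes J: "finite J" and M: "pos_def M"
  shows "\<exists>M'. pos_def M' \<and> det M' = det M \<and> (\<forall>i. M'$i$i \<le> M$i$i)
    \<and> (\<forall>i j. i \<noteq> j \<and> (i \<in> J \<or> j \<in> J) \<longrightarrow> M'$i$j = 0)
    \<and> ((\<forall>i. M'$i$i = M$i$i) \<longrightarrow> M' = M)"
  using J
proof (induction J rule: finite_induct)
  case empty
  show ?case using M by (intro exI[of _ M]) auto
next
  case (insert k J)
  obtain M1 where M1: "pos_def M1" "det M1 = det M" "\<forall>i. M1$i$i \<le> M$i$i"
    "\<forall>i j. i \<noteq> j \<and> (i \<in> J \<or> j \<in> J) \<longrightarrow> M1$i$j = 0"
    "(\<forall>i. M1$i$i = M$i$i) \<longrightarrow> M1 = M"
    using insert.IH by (elim exE conjE) blast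
  let ?M2 = "sym_elim M1 k"
  have le: "?M2 $ i $ i \<le> M1 $ i $ i" for i using sym_elim_diag_le[OF M1(1)] .
  have "?M2 $ i $ j = 0" if "i \<noteq> j" "i \<in> insert k J \<or> j \<in> insert k J" for i j
  proof (cases "i = k \<or> j = k")
    case True thus ?thesis using that(1) by (auto simp: sym_elim_def)
  next
    case False
    hence J: "i \<in> J \<or> j \<in> J" using that(2) by simp
    hence "M1$i$j = 0" using M1(4) that(1) by simp
    moreover have "M1$i$k = 0 \<or> M1$k$j = 0"
      using J False M1(4)[rule_format, of i k] M1(4)[rule_format, of k j] by auto
    ultimately show ?thesis using False by (simp add: sym_elim_def)
  qed
  moreover have "?M2 = M" if "\<forall>i. ?M2$i$i = M$i$i"
  proof -
    have "\<forall>i. M1$i$i = M$i$i" using that le M1(3) by (metis order_antisym)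
    hence "M1 = M" using M1(5) by blast
    thus ?thesis using sym_elim_diag_eq[OF M1(1)] that by simp
  qed
  moreover have "?M2 $ i $ i \<le> M $ i $ i" for i using le[of i] M1(3) by (meson order_trans)
  ultimately show ?case using sym_elim_pos_def_det[OF M1(1), of k] M1(2)
    by (intro exI[of _ ?M2]) simp
qed

lemma hadamard_inequality:
  fixes M :: "real^'p^'p"
  assumes M: "pos_def M"
  shows "det M > 0" "ln (det M) \<le> (\<Sum>i\<in>UNIV. ln (M$i$i))"
    "ln (det M) = (\<Sum>i\<in>UNIV. ln (M$i$i)) \<Longrightarrow> (\<forall>i j. i \<noteq> j \<longrightarrow> M$i$j = 0)"
proof -
  obtain M' where M': "pos_def M'" "det M' = det M" "\<forall>i. M'$i$i \<le> M$i$i"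
    "\<forall>i j. i \<noteq> j \<longrightarrow> M'$i$j = 0" "(\<forall>i. M'$i$i = M$i$i) \<longrightarrow> M' = M"
    using sym_elim_diagonalize[OF finite_class.finite_UNIV M] by auto
  have dpos: "M'$i$i > 0" for i using pos_def_diag_pos[OF M'(1)] .
  have d: "det M = (\<Prod>i\<in>UNIV. M'$i$i)" using det_diagonal[of M'] M'(2,4) by auto
  show "det M > 0" unfolding d using dpos by (simp add: prod_pos)
  have ld: "ln (det M) = (\<Sum>i\<in>UNIV. ln (M'$i$i))"
    unfolding d using dpos by (intro ln_prod) (auto simp: less_imp_neq[symmetric])
  have lle: "ln (M'$i$i) \<le> ln (M$i$i)" for i
    using dpos[of i] M'(3) by (subst ln_le_cancel_iff) (auto intro: order_less_le_trans)
  show "ln (det M) \<le> (\<Sum>i\<in>UNIV. ln (M$i$i))" unfolding ld by (intro sum_mono lle)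
  assume eq: "ln (det M) = (\<Sum>i\<in>UNIV. ln (M$i$i))"
  have "M'$i$i = M$i$i" for i
  proof (rule ccontr)
    assume "M'$i$i \<noteq> M$i$i"
    hence "M'$i$i < M$i$i" using M'(3) by (simp add: order_less_le)
    hence "ln (M'$i$i) < ln (M$i$i)" using dpos[of i] by simp
    hence "(\<Sum>i\<in>UNIV. ln (M'$i$i)) < (\<Sum>i\<in>UNIV. ln (M$i$i))"
      by (intro sum_strict_mono_ex1) (auto intro: lle)
    thus False using eq ld by simp
  qed
  thus "\<forall>i j. i \<noteq> j \<longrightarrow> M$i$j = 0" using M'(4,5) by simp
qed

section \<open>Diagonal entries of matrix powers\<close>

lemma mat_pow_0 [simp]: "mat_pow A 0 = mat 1"
  by (simp add: mat_pow_def)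

lemma mat_pow_Suc: "mat_pow A (Suc k) = A ** mat_pow A k"
  by (simp add: mat_pow_def)

lemma mat_pow_Suc_mv: "mat_pow A (Suc k) *v x = A *v (mat_pow A k *v x)"
  by (simp add: mat_pow_Suc matrix_vector_mul_assoc)

lemma mat_pow_inner:
  fixes M :: "real^'p^'p"
  assumes M: "sym_mat M"
  shows "(mat_pow M a *v x) \<bullet> (mat_pow M b *v y) = x \<bullet> (mat_pow M (a + b) *v y)"
proof (induction a arbitrary: b)
  case 0 thus ?case by simp
next
  case (Suc a)
  have "(mat_pow M (Suc a) *v x) \<bullet> (mat_pow M b *v y)
      = (mat_pow M a *v x) \<bullet> (mat_pow M (Suc b) *v y)"
    by (simp add: mat_pow_Suc_mv sym_mat_inner[OF M])
  thus ?case using Suc[of "Suc b"] by simp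
qed

lemma log_convex_seq_ge_power:
  fixes g :: "nat \<Rightarrow> real"
  assumes g0: "g 0 = 1" and pos: "\<And>k. g k > 0"
    and lc: "\<And>k. (g (k + 1))\<^sup>2 \<le> g k * g (k + 2)"
  shows "g 1 ^ k \<le> g k"
proof -
  have step: "g 1 * g k \<le> g (k + 1)" for k
  proof (induction k)
    case 0 thus ?case using g0 by simp
  next
    case (Suc k)
    have "g k * (g 1 * g (k + 1)) = g (k + 1) * (g 1 * g k)" by (simp add: algebra_simps)
    also have "\<dots> \<le> g (k + 1) * g (k + 1)"
      using Suc pos[of "k + 1"] by (intro mult_left_mono) auto
    also have "\<dots> \<le> g k * g (k + 2)" using lc[of k] by (simp add: power2_eq_square)
    finally have "g 1 * g (k + 1) \<le> g (k + 2)" using pos[of k] by simp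
    thus ?case by simp
  qed
  show ?thesis
  proof (induction k)
    case 0 thus ?case using g0 by simp
  next
    case (Suc k)
    have "g 1 ^ Suc k \<le> g 1 * g k" using Suc pos[of 1] by (simp add: mult_left_mono)
    also have "\<dots> \<le> g (Suc k)" using step[of k] by simp
    finally show ?case .
  qed
qed

text \<open>The moments \<open>g k = e\<^sup>T M\<^sup>k e\<close> of a positive definite \<open>M\<close> along \<open>e \<noteq> 0\<close> are positive and
  log-convex: with \<open>w\<^sub>j = M\<^sup>j e\<close> we have \<open>g (2j) = \<parallel>w\<^sub>j\<parallel>\<^sup>2\<close> and \<open>g (2j+1) = w\<^sub>j\<^sup>T M w\<^sub>j\<close>, and
  log-convexity is Cauchy--Schwarz in the Euclidean resp. the \<open>M\<close>-inner product.\<close>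
lemma pos_def_moments:
  fixes M :: "real^'p^'p" and e :: "real^'p"
  assumes M: "pos_def M" and e: "e \<noteq> 0"
  defines "g \<equiv> \<lambda>k. e \<bullet> (mat_pow M k *v e)"
  shows "g k > 0" "(g (k + 1))\<^sup>2 \<le> g k * g (k + 2)"
proof -
  have sM: "sym_mat M" using M by (simp add: pos_def_def)
  define w where "w k = mat_pow M k *v e" for k
  have wS: "w (Suc k) = M *v w k" for k unfolding w_def by (rule mat_pow_Suc_mv)
  have wprod: "w a \<bullet> w b = g (a + b)" for a b
    unfolding w_def g_def by (simp add: mat_pow_inner[OF sM])
  have wnz: "w k \<noteq> 0" for k
    by (induction k) (use e pos_def_kernel[OF M] in \<open>auto simp: w_def mat_pow_Suc_mv\<close>)
  have even: "g (2 * j) = w j \<bullet> w j" and odd: "g (2 * j + 1) = w j \<bullet> (M *v w j)" for j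
    using wprod[of j j] wprod[of j "Suc j"] by (simp_all add: wS mult_2)
  obtain j where parity: "k = 2 * j \<or> k = 2 * j + 1" by (metis oddE evenE)
  show "g k > 0" using parity even odd wnz M by (auto simp: pos_def_def)
  show "(g (k + 1))\<^sup>2 \<le> g k * g (k + 2)"
    using parity
  proof
    assume k: "k = 2 * j"
    have "g (k + 1) = w j \<bullet> w (Suc j)" "g (k + 2) = w (Suc j) \<bullet> w (Suc j)"
      using wprod[of j "Suc j"] wprod[of "Suc j" "Suc j"] k by (simp_all add: mult_2)
    thus ?thesis using Cauchy_Schwarz_ineq[of "w j" "w (Suc j)"] even[of j] k by simp
  next
    assume k: "k = 2 * j + 1"
    have "g (k + 1) = w j \<bullet> (M *v w (Suc j))"
      using wprod[of j "Suc (Suc j)"] k by (simp add: wS mult_2)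
    moreover have "g (k + 2) = w (Suc j) \<bullet> (M *v w (Suc j))" using odd[of "Suc j"] k by simp
    ultimately show ?thesis
      using pos_def_cauchy_schwarz[OF M, of "w j" "w (Suc j)"] odd[of j] k by simp
  qed
qed

text \<open>For positive definite \<open>M\<close>: \<open>(M\<^sup>k)\<^sub>i\<^sub>i \<ge> (M\<^sub>i\<^sub>i)\<^sup>k\<close>, applying the two previous lemmas to
  the moments along the \<open>i\<close>-th unit vector.\<close>
lemma diag_mat_pow_ge:
  fixes M :: "real^'p^'p"
  assumes M: "pos_def M"
  shows "(M $ i $ i) ^ k \<le> (mat_pow M k) $ i $ i"
proof -
  define g where "g k = (mat_pow M k) $ i $ i" for k
  have "axis i (1::real) \<noteq> 0" by (simp add: axis_eq_0_iff)
  note moments = pos_def_moments[OF M this]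
  have "g k > 0" "(g (k + 1))\<^sup>2 \<le> g k * g (k + 2)" for k
    using moments[of k] by (simp_all add: g_def quad_form_axis)
  note moments_g = this
  have "g 0 = 1" by (simp add: g_def mat_def)
  from log_convex_seq_ge_power[of g, OF this moments_g] show ?thesis
    by (simp add: g_def mat_pow_Suc)
qed

section \<open>Diagonal matrices, traces and orthogonal conjugation\<close>

lemma diag_mat_entry [simp]: "diag_mat d $ i $ i = d i"
  by (simp add: diag_mat_def)

lemma diag_mat_mult: "diag_mat a ** diag_mat b = diag_mat (\<lambda>i. a i * b i)"
proof -
  have "(diag_mat a ** diag_mat b) $ i $ j
      = (\<Sum>k\<in>UNIV. if k = i then (if i = j then a i * b i else 0) else 0)" for i j
    unfolding matrix_matrix_mult_def diag_mat_def
    by (simp only: vec_lambda_beta, rule sum.cong) auto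
  thus ?thesis by (simp add: vec_eq_iff diag_mat_def)
qed

lemma diag_mat_mv: "diag_mat a *v x = (\<chi> i. a i * x $ i)"
proof -
  have "(diag_mat a *v x) $ i = (\<Sum>k\<in>UNIV. if k = i then a i * x $ i else 0)" for i
    unfolding matrix_vector_mult_def diag_mat_def
    by (simp only: vec_lambda_beta, rule sum.cong) auto
  thus ?thesis by (simp add: vec_eq_iff)
qed

lemma diag_mat_one: "diag_mat (\<lambda>i. 1) = mat 1"
  by (simp add: diag_mat_def mat_def vec_eq_iff)

lemma mat_pow_diag_mat: "mat_pow (diag_mat a) k = diag_mat (\<lambda>i. a i ^ k)"
  by (induction k) (simp_all add: mat_pow_Suc diag_mat_mult flip: diag_mat_one)

lemma det_diag_mat: "det (diag_mat a) = (\<Prod>i\<in>UNIV. a i)"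
  by (subst det_diagonal) (auto simp: diag_mat_def)

lemma pos_def_diag_mat:
  assumes a: "\<And>i. a i > 0" shows "pos_def (diag_mat a)"
proof -
  have "x \<bullet> (diag_mat a *v x) > 0" if x0: "x \<noteq> 0" for x :: "real^'a"
  proof -
    obtain j where j: "x $ j \<noteq> 0" using x0 by (metis vec_eq_iff zero_index)
    have "x \<bullet> (diag_mat a *v x) = (\<Sum>i\<in>UNIV. a i * (x$i)\<^sup>2)"
      by (simp add: inner_vec_def diag_mat_mv power2_eq_square mult_ac)
    also have "\<dots> > 0"
    proof (rule sum_pos2[where i = j])
      show "0 < a j * (x $ j)\<^sup>2" using a[of j] j by simp
    qed (auto intro!: mult_nonneg_nonneg simp: a[THEN less_imp_le])
    finally show ?thesis .
  qed
  moreover have "sym_mat (diag_mat a)"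
    by (simp add: sym_mat_def diag_mat_def vec_eq_iff transpose_def)
  ultimately show ?thesis by (simp add: pos_def_def)
qed

lemma trace_scaleR: "trace (c *\<^sub>R (A::real^'p^'p)) = c * trace A"
  by (simp add: trace_def sum_distrib_left)

lemma trace_sum: "finite K \<Longrightarrow> trace (\<Sum>k\<in>K. A k) = (\<Sum>k\<in>K. trace (A k :: real^'p^'p))"
  unfolding trace_def by (simp add: sum.swap[of _ UNIV])

lemma trace_mult_diag_mat: "trace ((A::real^'p^'p) ** diag_mat s) = (\<Sum>i\<in>UNIV. A$i$i * s i)"
  by (simp add: trace_def matrix_matrix_mult_def diag_mat_def if_distrib sum.delta
      cong: if_cong)

lemma trace_diag_mat: "trace (diag_mat s) = (\<Sum>i\<in>UNIV. s i)"
  by (simp add: trace_def)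

lemma mat_pow_scaleR: "mat_pow (c *\<^sub>R (A::real^'p^'p)) k = (c ^ k) *\<^sub>R mat_pow A k"
  by (induction k) (simp_all add: mat_pow_Suc matrix_scalar_ac scalar_matrix_assoc[symmetric])

lemma orthogonal_conj_det:
  "orthogonal_matrix (V::real^'p^'p) \<Longrightarrow> det (transpose V ** A ** V) = det A"
  using det_orthogonal_matrix[of V] by (auto simp: det_mul)

lemma orthogonal_conj_trace:
  assumes "orthogonal_matrix (V::real^'p^'p)"
  shows "trace (transpose V ** A ** V) = trace A"
proof -
  have "trace (transpose V ** A ** V) = trace (transpose V ** (A ** V))"
    by (simp add: matrix_mul_assoc)
  also have "\<dots> = trace ((A ** V) ** transpose V)" by (rule trace_mul_sym)
  finally have "trace (transpose V ** A ** V) = trace ((A ** V) ** transpose V)" .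
  thus ?thesis
    using assms by (simp add: orthogonal_matrix_def matrix_mul_assoc[symmetric])
qed

lemma orthogonal_conj_mat_pow:
  assumes V: "orthogonal_matrix (V::real^'p^'p)"
  shows "mat_pow (transpose V ** A ** V) k = transpose V ** mat_pow A k ** V"
proof (induction k)
  case 0 thus ?case using V by (simp add: orthogonal_matrix_def)
next
  case (Suc k)
  have "mat_pow (transpose V ** A ** V) (Suc k)
      = transpose V ** A ** (V ** transpose V) ** mat_pow A k ** V"
    using Suc by (simp add: mat_pow_Suc matrix_mul_assoc)
  also have "\<dots> = transpose V ** mat_pow A (Suc k) ** V"
    using V by (simp add: orthogonal_matrix_def mat_pow_Suc matrix_mul_assoc)
  finally show ?case .
qed

lemma orthogonal_conj_cancel:
  assumes V: "orthogonal_matrix (V::real^'p^'p)"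
  shows "transpose V ** (V ** A ** transpose V) ** V = A"
    and "V ** (transpose V ** A ** V) ** transpose V = A"
  using V by (simp_all add: orthogonal_matrix_def matrix_mul_assoc,
      simp_all add: matrix_mul_assoc[symmetric])

section \<open>Maximising the precision objective\<close>

text \<open>The concave function \<open>t \<mapsto> a ln t - b t - c t\<^sup>q\<close> on \<open>t > 0\<close> attains its maximum exactly at a
  critical point \<open>d\<close>: compare with its tangent at \<open>d\<close>, using \<open>ln x \<le> x - 1\<close> and Bernoulli.\<close>
lemma scalar_objective_max:
  fixes t d a b c :: real and q :: nat
  assumes t: "t > 0" and d: "d > 0" and a: "a > 0" and c: "c > 0" and q: "q \<ge> 1"
    and crit: "a / d - b - real q * c * d ^ (q - 1) = 0"
  shows "a * ln t - b * t - c * t ^ q \<le> a * ln d - b * d - c * d ^ q"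
    and "a * ln t - b * t - c * t ^ q = a * ln d - b * d - c * d ^ q \<Longrightarrow> t = d"
proof -
  have lnq: "ln t = ln d + ln (t / d)" using t d by (simp add: ln_div)
  have tangent_ln: "a * ln t \<le> a * ln d + a * (t - d) / d"
  proof -
    have "ln (t / d) \<le> (t - d) / d" using ln_le_minus_one[of "t / d"] t d by (simp add: field_simps)
    hence "a * ln (t / d) \<le> a * ((t - d) / d)" using a by (intro mult_left_mono) auto
    thus ?thesis using lnq by (simp add: algebra_simps)
  qed
  have tangent_pow: "c * d ^ q + real q * c * d ^ (q - 1) * (t - d) \<le> c * t ^ q"
  proof -
    have "1 + real q * (t / d - 1) \<le> (1 + (t / d - 1)) ^ q"
      using t d by (intro Bernoulli_inequality) simp
    hence "d ^ q * (1 + real q * (t / d - 1)) \<le> t ^ q"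
      using d by (simp add: power_divide field_simps)
    moreover have "d ^ q * (1 + real q * (t / d - 1)) = d ^ q + real q * d ^ (q - 1) * (t - d)"
      using d q power_eq_pred_mult[of q d] by (simp add: field_simps)
    ultimately have "d ^ q + real q * d ^ (q - 1) * (t - d) \<le> t ^ q" by simp
    hence "c * (d ^ q + real q * d ^ (q - 1) * (t - d)) \<le> c * t ^ q"
      using c by (intro mult_left_mono) auto
    thus ?thesis by (simp add: algebra_simps)
  qed
  have slope: "a * (t - d) / d - b * (t - d) - real q * c * d ^ (q - 1) * (t - d) = 0"
    using arg_cong[OF crit, of "\<lambda>z. z * (t - d)"] by (simp add: algebra_simps)
  show "a * ln t - b * t - c * t ^ q \<le> a * ln d - b * d - c * d ^ q"
    using tangent_ln tangent_pow slope by (simp add: algebra_simps)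
  assume eq: "a * ln t - b * t - c * t ^ q = a * ln d - b * d - c * d ^ q"
  have "a * ln t = a * ln d + a * (t - d) / d"
    using eq tangent_ln tangent_pow slope by (simp add: algebra_simps)
  hence "a * ln (t / d) = a * ((t - d) / d)" using lnq by (simp add: algebra_simps)
  hence "ln (t / d) = t / d - 1" using a d by (simp add: diff_divide_distrib)
  hence "t / d = 1" using t d by (intro ln_eq_minus_one) simp_all
  thus "t = d" using d by simp
qed

text \<open>By Hadamard's inequality and \<open>(M\<^sup>q)\<^sub>i\<^sub>i \<ge> M\<^sub>i\<^sub>i\<^sup>q\<close>, the objective
  \<open>a ln det M - \<Sum> b\<^sub>i M\<^sub>i\<^sub>i - c tr M\<^sup>q\<close> is bounded by the sum of the scalar objectives at the
  diagonal of \<open>M\<close>, hence by their maxima; equality forces \<open>M = diag d\<close>.\<close>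
lemma diag_objective_max:
  fixes M :: "real^'p^'p" and b d :: "'p \<Rightarrow> real" and a c :: real and q :: nat
  assumes M: "pos_def M" and a: "a > 0" and c: "c > 0" and q: "q \<ge> 1"
    and d: "\<And>i. d i > 0" and crit: "\<And>i. a / d i - b i - real q * c * d i ^ (q - 1) = 0"
  defines "phi \<equiv> \<lambda>i t. a * ln t - b i * t - c * t ^ q"
  shows "a * ln (det M) - (\<Sum>i\<in>UNIV. M$i$i * b i) - c * trace (mat_pow M q)
       \<le> (\<Sum>i\<in>UNIV. phi i (d i))"
    and "a * ln (det M) - (\<Sum>i\<in>UNIV. M$i$i * b i) - c * trace (mat_pow M q)
       = (\<Sum>i\<in>UNIV. phi i (d i)) \<Longrightarrow> M = diag_mat d"
proof -
  let ?lhs = "a * ln (det M) - (\<Sum>i\<in>UNIV. M$i$i * b i) - c * trace (mat_pow M q)"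
  have mpos: "M$i$i > 0" for i using pos_def_diag_pos[OF M] .
  have phi_le: "phi i (M$i$i) \<le> phi i (d i)" for i
    unfolding phi_def using scalar_objective_max(1)[OF mpos d a c q crit] .
  have diag_sum: "(\<Sum>i\<in>UNIV. phi i (M$i$i))
      = a * (\<Sum>i\<in>UNIV. ln (M$i$i)) - (\<Sum>i\<in>UNIV. M$i$i * b i) - c * (\<Sum>i\<in>UNIV. (M$i$i)^q)"
    by (simp add: phi_def sum_subtractf sum_distrib_left mult.commute)
  have hada: "a * ln (det M) \<le> a * (\<Sum>i\<in>UNIV. ln (M$i$i))"
    using hadamard_inequality(2)[OF M] a by simp
  have "(\<Sum>i\<in>UNIV. (M$i$i)^q) \<le> trace (mat_pow M q)"
    unfolding trace_def by (intro sum_mono diag_mat_pow_ge[OF M])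
  hence pow: "c * (\<Sum>i\<in>UNIV. (M$i$i)^q) \<le> c * trace (mat_pow M q)" using c by simp
  have sum_le: "(\<Sum>i\<in>UNIV. phi i (M$i$i)) \<le> (\<Sum>i\<in>UNIV. phi i (d i))"
    by (intro sum_mono phi_le)
  show "?lhs \<le> (\<Sum>i\<in>UNIV. phi i (d i))" using sum_le hada pow diag_sum by linarith
  assume eq: "?lhs = (\<Sum>i\<in>UNIV. phi i (d i))"
  have "a * ln (det M) = a * (\<Sum>i\<in>UNIV. ln (M$i$i))"
    using sum_le hada pow diag_sum eq by linarith
  hence "ln (det M) = (\<Sum>i\<in>UNIV. ln (M$i$i))" using a by simp
  hence off: "\<forall>i j. i \<noteq> j \<longrightarrow> M$i$j = 0" using hadamard_inequality(3)[OF M] by blast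
  have "M$i$i = d i" for i
  proof (rule ccontr)
    assume ne: "M$i$i \<noteq> d i"
    have "phi i (M$i$i) < phi i (d i)"
      using phi_le[of i] scalar_objective_max(2)[OF mpos[of i] d[of i] a c q crit[of i]] ne
      unfolding phi_def by fastforce
    hence "(\<Sum>i\<in>UNIV. phi i (M$i$i)) < (\<Sum>i\<in>UNIV. phi i (d i))"
      by (intro sum_strict_mono_ex1) (auto intro: phi_le)
    thus False using hada pow diag_sum eq by linarith
  qed
  thus "M = diag_mat d" using off by (auto simp: vec_eq_iff diag_mat_def)
qed

text \<open>The part of the log posterior depending on the precision matrix \<open>\<Omega> = \<Sigma>\<^sup>-\<^sup>1\<close>, for
  sample size \<open>n\<close>, sample covariance \<open>S\<close> and prior weight \<open>c\<close>.\<close>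
definition prec_objective :: "real \<Rightarrow> nat \<Rightarrow> real^'p^'p \<Rightarrow> real \<Rightarrow> nat \<Rightarrow> real^'p^'p \<Rightarrow> real"
  where "prec_objective N n S c q Om =
    N * ln (det Om) - real n * trace (Om ** S) - c * trace (mat_pow Om q)"

lemma prec_objective_rotate:
  fixes V Om :: "real^'p^'p"
  assumes V: "orthogonal_matrix V" and S: "S = V ** diag_mat s ** transpose V"
  defines "M \<equiv> transpose V ** Om ** V"
  shows "prec_objective N n S c q Om
    = N * ln (det M) - (\<Sum>i\<in>UNIV. M$i$i * (real n * s i)) - c * trace (mat_pow M q)"
proof -
  have "trace (Om ** S) = trace (transpose V ** (Om ** V ** diag_mat s))"
    unfolding S by (subst trace_mul_sym) (simp add: matrix_mul_assoc)
  also have "\<dots> = (\<Sum>i\<in>UNIV. M$i$i * s i)"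
    by (simp add: M_def matrix_mul_assoc trace_mult_diag_mat)
  finally have "real n * trace (Om ** S) = (\<Sum>i\<in>UNIV. M$i$i * (real n * s i))"
    by (simp add: sum_distrib_left mult_ac)
  thus ?thesis unfolding prec_objective_def M_def
    by (simp add: orthogonal_conj_det[OF V] orthogonal_conj_mat_pow[OF V]
        orthogonal_conj_trace[OF V])
qed

lemma prec_objective_max:
  fixes V :: "real^'p^'p" and s d :: "'p \<Rightarrow> real"
  assumes V: "orthogonal_matrix V" and S: "S = V ** diag_mat s ** transpose V"
    and N: "N > 0" and c: "c > 0" and q: "q \<ge> 1" and d: "\<And>i. d i > 0"
    and crit: "\<And>i. N / d i - real n * s i - real q * c * d i ^ (q - 1) = 0"
    and Om: "pos_def Om"
  defines "D \<equiv> V ** diag_mat d ** transpose V"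
  shows "prec_objective N n S c q Om \<le> prec_objective N n S c q D"
    and "prec_objective N n S c q Om = prec_objective N n S c q D \<Longrightarrow> Om = D"
proof -
  let ?M = "transpose V ** Om ** V"
  have "invertible V" using V by (auto simp: orthogonal_matrix_def invertible_def)
  hence Mpd: "pos_def ?M" using pos_def_congruence[OF Om] by blast
  note G = diag_objective_max[OF Mpd N c q d crit]
  have "ln (det (diag_mat d)) = (\<Sum>i\<in>UNIV. ln (d i))"
    unfolding det_diag_mat using d by (intro ln_prod) (auto simp: less_imp_neq[symmetric])
  hence FD: "prec_objective N n S c q D
      = (\<Sum>i\<in>UNIV. N * ln (d i) - real n * s i * d i - c * d i ^ q)"
    unfolding prec_objective_rotate[OF V S] D_def orthogonal_conj_cancel(1)[OF V]
    by (simp add: mat_pow_diag_mat trace_diag_mat sum_subtractf sum_distrib_left mult_ac)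
  have FOm: "prec_objective N n S c q Om = N * ln (det ?M) - (\<Sum>i\<in>UNIV. ?M$i$i * (real n * s i))
      - c * trace (mat_pow ?M q)"
    by (rule prec_objective_rotate[OF V S])
  show "prec_objective N n S c q Om \<le> prec_objective N n S c q D"
    unfolding FD FOm using G(1) .
  assume "prec_objective N n S c q Om = prec_objective N n S c q D"
  hence "?M = diag_mat d" using G(2) unfolding FD FOm by simp
  thus "Om = D" using orthogonal_conj_cancel(2)[OF V, of Om] by (simp add: D_def)
qed

section \<open>The posterior objective\<close>

lemma outer_mv: "outer u v *v x = (v \<bullet> x) *\<^sub>R (u :: real^'p)"
  by (simp add: vec_eq_iff outer_def matrix_vector_mult_def inner_vec_def sum_distrib_left
      mult_ac)

lemma sum_matrix_vector_mult:
  "finite K \<Longrightarrow> (\<Sum>k\<in>K. A k) *v x = (\<Sum>k\<in>K. A k *v (x::real^'p))"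
  by (induction K rule: finite_induct) (auto simp: matrix_vector_mult_add_rdistrib)

lemma matrix_vector_mult_sum:
  "finite K \<Longrightarrow> (A::real^'p^'p) *v (\<Sum>k\<in>K. x k) = (\<Sum>k\<in>K. A *v x k)"
  by (induction K rule: finite_induct) (auto simp: matrix_vector_right_distrib)

lemma matrix_mult_sum:
  "finite K \<Longrightarrow> (A::real^'p^'p) ** (\<Sum>k\<in>K. B k) = (\<Sum>k\<in>K. A ** B k)"
  by (induction K rule: finite_induct) (auto simp: matrix_add_ldistrib)

lemma trace_mult_outer: "trace ((A::real^'p^'p) ** outer u v) = (A *v u) \<bullet> v"
proof -
  have "trace (A ** outer u v) = (\<Sum>i\<in>UNIV. \<Sum>k\<in>UNIV. A$i$k * u$k * v$i)"
    by (simp add: trace_def matrix_matrix_mult_def outer_def mult_ac)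
  also have "\<dots> = (A *v u) \<bullet> v"
    by (simp add: matrix_vector_mult_def inner_vec_def sum_distrib_right)
  finally show ?thesis .
qed

text \<open>The sample covariance is positive semidefinite: with \<open>X\<^sub>m\<close> the sample mean,
  \<open>x\<^sup>T S x = (1/n) \<Sum> ((X\<^sub>k - X\<^sub>m) \<bullet> x)\<^sup>2\<close>.\<close>
lemma sample_cov_psd: "x \<bullet> (sample_cov n X *v x) \<ge> 0"
proof -
  define y where "y k = X k - sample_mean n X" for k
  have "sample_cov n X *v x = (1 / real n) *\<^sub>R (\<Sum>k<n. (y k \<bullet> x) *\<^sub>R y k)"
    unfolding sample_cov_def y_def[symmetric]
    by (simp add: scaleR_matrix_vector_assoc[symmetric] sum_matrix_vector_mult outer_mv)
  hence "x \<bullet> (sample_cov n X *v x) = (1 / real n) * (\<Sum>k<n. (y k \<bullet> x)\<^sup>2)"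
    by (simp add: inner_sum_right inner_commute[of x] power2_eq_square)
  also have "\<dots> \<ge> 0" by (intro mult_nonneg_nonneg sum_nonneg) auto
  finally show ?thesis .
qed

lemma sample_cov_eigenvalues_nonneg:
  fixes V :: "real^'p^'p"
  assumes V: "orthogonal_matrix V" and S: "sample_cov n X = V ** diag_mat s ** transpose V"
  shows "s i \<ge> 0"
proof -
  have "s i = axis i 1 \<bullet> ((transpose V ** sample_cov n X ** V) *v axis i 1)"
    unfolding S orthogonal_conj_cancel(1)[OF V] by (simp add: quad_form_axis)
  also have "\<dots> = (V *v axis i 1) \<bullet> (sample_cov n X *v (V *v axis i 1))"
    by (metis dot_lmul_matrix matrix_vector_mul_assoc transpose_transpose
        vector_transpose_matrix)
  also have "\<dots> \<ge> 0" by (rule sample_cov_psd)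
  finally show ?thesis .
qed

lemma likelihood_decomposition:
  fixes X :: "nat \<Rightarrow> real^'p" and Om :: "real^'p^'p"
  assumes n: "n \<ge> 1" and sOm: "sym_mat Om"
  shows "(\<Sum>i<n. (X i - mu) \<bullet> (Om *v (X i - mu)))
     = real n * trace (Om ** sample_cov n X)
       + real n * ((sample_mean n X - mu) \<bullet> (Om *v (sample_mean n X - mu)))"
proof -
  define xb where "xb = sample_mean n X"
  define y where "y k = X k - xb" for k
  define z where "z = xb - mu"
  have centred: "(\<Sum>k<n. y k) = 0"
  proof -
    have "(\<Sum>k<n. y k) = (\<Sum>k<n. X k) - real n *\<^sub>R xb"
      by (simp only: y_def sum_subtractf sum_constant_scaleR card_lessThan)
    also have "real n *\<^sub>R xb = (\<Sum>k<n. X k)" using n by (simp add: xb_def sample_mean_def)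
    finally show ?thesis by simp
  qed
  have expand: "(y k + z) \<bullet> (Om *v (y k + z))
      = y k \<bullet> (Om *v y k) + 2 * (z \<bullet> (Om *v y k)) + z \<bullet> (Om *v z)" for k
    using sym_mat_inner[OF sOm, of "y k" z]
    by (simp add: matrix_vector_right_distrib inner_add_left inner_add_right inner_commute)
  have tr: "(\<Sum>k<n. y k \<bullet> (Om *v y k)) = real n * trace (Om ** sample_cov n X)"
  proof -
    have sc: "Om ** (c *\<^sub>R B) = c *\<^sub>R (Om ** B)" for c and B :: "real^'p^'p"
      by (simp add: matrix_scalar_ac scalar_matrix_assoc)
    have "trace (Om ** sample_cov n X) = (1 / real n) * (\<Sum>k<n. trace (Om ** outer (y k) (y k)))"
      unfolding sample_cov_def xb_def[symmetric] y_def[symmetric] sc trace_scaleR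
      by (simp add: matrix_mult_sum trace_sum)
    also have "\<dots> = (1 / real n) * (\<Sum>k<n. y k \<bullet> (Om *v y k))"
      by (simp add: trace_mult_outer sym_mat_inner[OF sOm])
    finally show ?thesis using n by simp
  qed
  have "(\<Sum>i<n. (X i - mu) \<bullet> (Om *v (X i - mu))) = (\<Sum>k<n. (y k + z) \<bullet> (Om *v (y k + z)))"
    by (simp add: y_def z_def)
  also have "\<dots> = (\<Sum>k<n. y k \<bullet> (Om *v y k)) + 2 * (z \<bullet> (Om *v (\<Sum>k<n. y k)))
      + real n * (z \<bullet> (Om *v z))"
    by (simp add: expand sum.distrib sum_distrib_left matrix_vector_mult_sum inner_sum_right)
  finally show ?thesis using centred tr by (simp add: xb_def z_def)
qed

lemma pos_def_scalar: "c > 0 \<Longrightarrow> pos_def (c *\<^sub>R (mat 1 :: real^'p^'p))"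
  by (simp add: pos_def_def sym_mat_def transpose_scalar scaleR_matrix_vector_assoc[symmetric])

text \<open>The positive definite square root of \<open>\<alpha> I\<close> is \<open>\<surd>\<alpha> I\<close>: any positive definite \<open>R\<close> with
  \<open>R\<^sup>2 = \<alpha> I\<close> satisfies \<open>(R + \<surd>\<alpha>)(R - \<surd>\<alpha>) = 0\<close> with \<open>R + \<surd>\<alpha>\<close> positive definite.\<close>
lemma mat_sqrt_scalar:
  fixes alpha :: real assumes a: "alpha > 0"
  shows "mat_sqrt (alpha *\<^sub>R (mat 1 :: real^'p^'p)) = sqrt alpha *\<^sub>R mat 1"
  unfolding mat_sqrt_def
proof (rule the_equality)
  show "pos_def (sqrt alpha *\<^sub>R (mat 1 :: real^'p^'p)) \<and>
      (sqrt alpha *\<^sub>R mat 1) ** (sqrt alpha *\<^sub>R mat 1) = alpha *\<^sub>R (mat 1 :: real^'p^'p)"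
    using a by (simp add: pos_def_scalar matrix_scalar_ac scalar_matrix_assoc[symmetric])
next
  fix R :: "real^'p^'p"
  assume R: "pos_def R \<and> R ** R = alpha *\<^sub>R mat 1"
  let ?r = "sqrt alpha"
  have r: "?r > 0" "?r * ?r = alpha" using a by auto
  have "R *v y = ?r *\<^sub>R y" for y
  proof -
    define z where "z = R *v y - ?r *\<^sub>R y"
    have RR: "R *v (R *v y) = alpha *\<^sub>R y"
      using R by (simp add: matrix_vector_mul_assoc scaleR_matrix_vector_assoc[symmetric])
    have "R *v z + ?r *\<^sub>R z = 0"
      unfolding z_def using RR r
      by (simp add: matrix_vector_mult_diff_distrib matrix_vector_mult_scaleR algebra_simps)
    hence "z \<bullet> (R *v z) + ?r * (z \<bullet> z) = 0"
      by (metis inner_add_right inner_scaleR_right inner_zero_right)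
    moreover have "z \<bullet> (R *v z) \<ge> 0" using pos_def_quad_nonneg R by blast
    ultimately have "z \<bullet> z \<le> 0" using r(1) by (simp add: add_nonneg_eq_0_iff)
    hence "z = 0" by (metis inner_eq_zero_iff order_antisym inner_ge_zero)
    thus ?thesis unfolding z_def by simp
  qed
  thus "R = ?r *\<^sub>R mat 1"
    by (simp add: matrix_eq scaleR_matrix_vector_assoc[symmetric])
qed

lemma prior_precision_scalar:
  fixes Sg :: "real^'p^'p"
  assumes a: "alpha > 0" and Sg: "pos_def Sg"
  defines "Ri \<equiv> matrix_inv (mat_sqrt (alpha *\<^sub>R (mat 1 :: real^'p^'p)))"
  shows "matrix_inv (Ri ** Sg ** Ri) = alpha *\<^sub>R matrix_inv Sg"
proof -
  let ?r = "sqrt alpha"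
  have r: "?r > 0" "?r * ?r = alpha" using a by auto
  have "Ri = (1 / ?r) *\<^sub>R mat 1"
    unfolding Ri_def mat_sqrt_scalar[OF a] using r
    by (intro matrix_inv_unique) (simp add: matrix_scalar_ac scalar_matrix_assoc[symmetric])
  hence "Ri ** Sg ** Ri = (1 / alpha) *\<^sub>R Sg"
    using r by (simp add: matrix_scalar_ac scalar_matrix_assoc[symmetric])
  moreover have "(1 / alpha) *\<^sub>R Sg ** (alpha *\<^sub>R matrix_inv Sg) = mat 1"
    using a matrix_inv_props(1)[OF pos_def_invertible[OF Sg]]
    by (simp add: matrix_scalar_ac scalar_matrix_assoc[symmetric])
  ultimately show ?thesis by (simp add: matrix_inv_unique)
qed

lemma map_objective_scalar_prior:
  fixes X :: "nat \<Rightarrow> real^'p" and Sg :: "real^'p^'p" and alpha m N :: real and q n :: nat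
  assumes n: "n \<ge> 1" and a: "alpha > 0" and Sg: "pos_def Sg"
    and N: "N = real n + real CARD('p) + real q * m + 1"
  shows "map_objective n X (alpha *\<^sub>R mat 1) m q mu Sg
    = exp ((prec_objective N n (sample_cov n X) (alpha ^ q) q (matrix_inv Sg)
          - real n * ((sample_mean n X - mu) \<bullet> (matrix_inv Sg *v (sample_mean n X - mu)))) / 2)"
proof -
  define Om where "Om = matrix_inv Sg"
  have I: "Sg ** Om = mat 1"
    using matrix_inv_props[OF pos_def_invertible[OF Sg]] by (auto simp: Om_def)
  have dpos: "det Sg > 0" using hadamard_inequality(1)[OF Sg] .
  have "det Sg * det Om = 1" using arg_cong[OF I, of det] by (simp add: det_mul)
  hence "det Om = 1 / det Sg" using dpos by (simp add: field_simps)
  hence lnd: "ln (det Sg) = - ln (det Om)" using dpos by (simp add: ln_div)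
  have "sym_mat Om" using pos_def_matrix_inv[OF Sg] by (simp add: pos_def_def Om_def)
  note L = likelihood_decomposition[OF n this, of X mu]
  have "map_objective n X (alpha *\<^sub>R mat 1) m q mu Sg
     = exp ((- real n / 2) * ln (det Sg))
       * exp (- (1/2) * (\<Sum>i<n. (X i - mu) \<bullet> (Om *v (X i - mu))))
       * exp (- (1/2) * (alpha ^ q * trace (mat_pow Om q)))
       * exp ((- (real q * m + real CARD('p) + 1) / 2) * ln (det Sg))"
    unfolding map_objective_def Let_def prior_precision_scalar[OF a Sg] Om_def[symmetric]
    using dpos by (simp add: powr_def mat_pow_scaleR trace_scaleR)
  also have "\<dots> = exp ((- real n / 2) * ln (det Sg)
       + (- (1/2) * (\<Sum>i<n. (X i - mu) \<bullet> (Om *v (X i - mu))))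
       + (- (1/2) * (alpha ^ q * trace (mat_pow Om q)))
       + ((- (real q * m + real CARD('p) + 1) / 2) * ln (det Sg)))"
    by (simp only: exp_add)
  also have "\<dots> = exp ((N * ln (det Om) - real n * trace (Om ** sample_cov n X)
          - alpha ^ q * trace (mat_pow Om q)
          - real n * ((sample_mean n X - mu) \<bullet> (Om *v (sample_mean n X - mu)))) / 2)"
    unfolding L lnd N by (simp add: field_simps)
  finally show ?thesis by (simp add: prec_objective_def Om_def)
qed

section \<open>The MAP estimator\<close>

lemma mu_eq_critical_point:
  fixes N alpha s mu :: real and n q :: nat
  assumes q: "q \<ge> 1" and mu: "mu > 0" and e: "mu_eq N n q alpha s mu"
  shows "N / (1 / mu) - real n * s - real q * alpha ^ q * (1 / mu) ^ (q - 1) = 0"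
proof -
  have p: "mu ^ (q - 1) > 0" using mu by simp
  have "mu ^ (q - 1) * (N / (1 / mu) - real n * s - real q * alpha ^ q * (1 / mu) ^ (q - 1))
      = N * mu ^ q - real n * s * mu ^ (q - 1) - real q * alpha ^ q"
    using p power_eq_pred_mult[of q mu] q mu by (simp add: power_one_over field_simps)
  also have "\<dots> = 0" using e by (simp add: mu_eq_def)
  finally show ?thesis using p mu by simp
qed

lemma orthogonal_conj_diag_pos_def:
  fixes V :: "real^'p^'p"
  assumes V: "orthogonal_matrix V" and mu: "\<And>i. mu i > 0"
  shows "pos_def (V ** diag_mat mu ** transpose V)"
    and "matrix_inv (V ** diag_mat mu ** transpose V) = V ** diag_mat (\<lambda>i. 1 / mu i) ** transpose V"
proof -
  have "invertible (transpose V)" using V by (auto simp: orthogonal_matrix_def invertible_def)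
  thus "pos_def (V ** diag_mat mu ** transpose V)"
    using pos_def_congruence[OF pos_def_diag_mat[of mu, OF mu], of "transpose V"] by simp
  have "(V ** diag_mat mu ** transpose V) ** (V ** diag_mat (\<lambda>i. 1 / mu i) ** transpose V)
      = V ** diag_mat mu ** (transpose V ** V) ** diag_mat (\<lambda>i. 1 / mu i) ** transpose V"
    by (simp add: matrix_mul_assoc)
  also have "\<dots> = V ** (diag_mat mu ** diag_mat (\<lambda>i. 1 / mu i)) ** transpose V"
    using V by (simp add: orthogonal_matrix_def matrix_mul_assoc)
  also have "\<dots> = V ** diag_mat (\<lambda>i. mu i * (1 / mu i)) ** transpose V"
    by (simp only: diag_mat_mult)
  also have "(\<lambda>i. mu i * (1 / mu i)) = (\<lambda>i. 1)"
    using mu by (auto simp: fun_eq_iff less_imp_neq[symmetric])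
  finally show "matrix_inv (V ** diag_mat mu ** transpose V)
      = V ** diag_mat (\<lambda>i. 1 / mu i) ** transpose V"
    using V by (intro matrix_inv_unique) (simp add: diag_mat_one orthogonal_matrix_def)
qed

text \<open>Reduction of the MAP problem to the precision objective: the mean term
  \<open>n (X\<^sub>m - \<mu>)\<^sup>T \<Sigma>\<^sup>-\<^sup>1 (X\<^sub>m - \<mu>)\<close> is nonnegative and vanishes only at the sample mean, so
  \<open>\<Sigma>\<close> is the MAP estimator as soon as \<open>\<Sigma>\<^sup>-\<^sup>1\<close> is the unique maximiser of the precision
  objective.\<close>
lemma is_MAP_Sigma_from_precision:
  fixes X :: "nat \<Rightarrow> real^'p" and Sh :: "real^'p^'p" and alpha m N :: real and q n :: nat
  assumes n: "n \<ge> 1" and a: "alpha > 0" and N: "N = real n + real CARD('p) + real q * m + 1"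
    and Sh_pd: "pos_def Sh"
  defines "F \<equiv> prec_objective N n (sample_cov n X) (alpha ^ q) q"
  assumes max: "\<And>Om. pos_def Om \<Longrightarrow>
      F Om \<le> F (matrix_inv Sh) \<and> (F Om = F (matrix_inv Sh) \<longrightarrow> Om = matrix_inv Sh)"
  shows "is_MAP_Sigma n X (alpha *\<^sub>R mat 1) m q Sh"
proof -
  define xb where "xb = sample_mean n X"
  define Q where "Q mu' Sg = (xb - mu') \<bullet> (matrix_inv Sg *v (xb - mu'))"
    for mu' and Sg :: "real^'p^'p"
  have obj: "map_objective n X (alpha *\<^sub>R mat 1) m q mu' Sg
      = exp ((F (matrix_inv Sg) - real n * Q mu' Sg) / 2)"
    if "pos_def Sg" for mu' and Sg :: "real^'p^'p"
    unfolding map_objective_scalar_prior[OF n a that N] F_def Q_def xb_def ..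
  have Q_nonneg: "real n * Q mu' Sg \<ge> 0" if "pos_def Sg" for mu' and Sg :: "real^'p^'p"
    unfolding Q_def using pos_def_quad_nonneg[OF pos_def_matrix_inv[OF that]] by simp
  have obj_Sh: "map_objective n X (alpha *\<^sub>R mat 1) m q xb Sh = exp (F (matrix_inv Sh) / 2)"
    using obj[OF Sh_pd, of xb] by (simp add: Q_def)
  show ?thesis
    unfolding is_MAP_Sigma_def
  proof (intro exI[of _ xb] conjI allI impI)
    show "pos_def Sh" by (rule Sh_pd)
  next
    fix mu' and Sg :: "real^'p^'p" assume Sg: "pos_def Sg"
    show "map_objective n X (alpha *\<^sub>R mat 1) m q mu' Sg
        \<le> map_objective n X (alpha *\<^sub>R mat 1) m q xb Sh"
      unfolding obj[OF Sg] obj_Sh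
      using max[OF pos_def_matrix_inv[OF Sg]] Q_nonneg[OF Sg, of mu'] by simp
  next
    fix mu' and Sg :: "real^'p^'p"
    assume H: "pos_def Sg \<and> map_objective n X (alpha *\<^sub>R mat 1) m q mu' Sg
        = map_objective n X (alpha *\<^sub>R mat 1) m q xb Sh"
    hence Sg: "pos_def Sg" by blast
    have eq: "F (matrix_inv Sg) - real n * Q mu' Sg = F (matrix_inv Sh)"
      using H unfolding obj[OF Sg] obj_Sh by simp
    note Sg_max = max[OF pos_def_matrix_inv[OF Sg]]
    have "real n * Q mu' Sg = 0" using eq Sg_max Q_nonneg[OF Sg, of mu'] by linarith
    hence Q0: "Q mu' Sg = 0" using n by simp
    have "xb - mu' \<noteq> 0 \<longrightarrow> Q mu' Sg > 0"
      using pos_def_matrix_inv[OF Sg] by (simp add: Q_def pos_def_def)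
    thus "mu' = xb" using Q0 by auto
    have "matrix_inv Sg = matrix_inv Sh" using Sg_max eq Q0 by simp
    thus "Sg = Sh" using matrix_inv_inv[OF Sg] matrix_inv_inv[OF Sh_pd] by metis
  qed
qed

lemma MAP_Sigma_spectral:
  fixes X :: "nat \<Rightarrow> real^'p" and V :: "real^'p^'p" and s mu :: "'p \<Rightarrow> real"
    and alpha m N :: real and q n :: nat
  assumes n: "n \<ge> 1" and q: "q \<ge> 1" and a: "alpha > 0"
    and N: "N = real n + real CARD('p) + real q * m + 1" and Npos: "N > 0"
    and V: "orthogonal_matrix V" and S: "sample_cov n X = V ** diag_mat s ** transpose V"
    and mu: "\<And>i. mu i > 0" and mueq: "\<And>i. mu_eq N n q alpha (s i) (mu i)"
  shows "is_MAP_Sigma n X (alpha *\<^sub>R mat 1) m q (V ** diag_mat mu ** transpose V)"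
proof (rule is_MAP_Sigma_from_precision[OF n a N orthogonal_conj_diag_pos_def(1)[OF V mu]])
  fix Om :: "real^'p^'p" assume "pos_def Om"
  from prec_objective_max[OF V S Npos _ q _ mu_eq_critical_point[OF q mu mueq] this] a mu
  show "prec_objective N n (sample_cov n X) (alpha ^ q) q Om
      \<le> prec_objective N n (sample_cov n X) (alpha ^ q) q (matrix_inv (V ** diag_mat mu ** transpose V))
    \<and> (prec_objective N n (sample_cov n X) (alpha ^ q) q Om
      = prec_objective N n (sample_cov n X) (alpha ^ q) q (matrix_inv (V ** diag_mat mu ** transpose V))
      \<longrightarrow> Om = matrix_inv (V ** diag_mat mu ** transpose V))"
    unfolding orthogonal_conj_diag_pos_def(2)[OF V mu] by simp
qed

theorem mainTheorem6:
  fixes n :: nat and X :: "nat \<Rightarrow> real^'p" and m :: real and q :: nat and alpha :: real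
    and N :: real
  assumes "n \<ge> 1" and "m \<ge> real CARD('p)" and "q \<ge> 1" and "alpha > 0"
    and "N = real n + real CARD('p) + real q * m + 1"
  shows "(\<forall>s\<ge>0. \<exists>!x. x > 0 \<and> mu_eq N n q alpha s x)
    \<and> (\<forall>V s. orthogonal_matrix V \<and> sample_cov n X = V ** diag_mat s ** transpose V \<longrightarrow>
         is_MAP_Sigma n X (alpha *\<^sub>R mat 1) m q
           (V ** diag_mat (\<lambda>i. mu_q N n q alpha (s i)) ** transpose V))
    \<and> mu_q N n q alpha 0 = alpha * (real q / N) powr (1 / real q)
    \<and> (\<forall>s\<ge>0. mu_q N n q alpha s \<ge> alpha * (real q / N) powr (1 / real q))
    \<and> (\<forall>s\<ge>0. mu_q N n q alpha s \<ge> real n / N * s)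
    \<and> ((\<lambda>s. mu_q N n q alpha s / s) \<longlongrightarrow> real n / N) at_top"
proof -
  note n = assms(1) and q = assms(3) and a = assms(4) and N = assms(5)
  have "real q * m \<ge> 0" using assms(2) by (simp add: order_trans[OF of_nat_0_le_iff])
  hence Npos: "N > 0" using N by linarith
  note bounds = mu_q_bounds[OF q a Npos, where n = n]
  have MAP: "is_MAP_Sigma n X (alpha *\<^sub>R mat 1) m q
      (V ** diag_mat (\<lambda>i. mu_q N n q alpha (s i)) ** transpose V)"
    if V: "orthogonal_matrix V" and S: "sample_cov n X = V ** diag_mat s ** transpose V" for V s
  proof (rule MAP_Sigma_spectral[OF n q a N Npos V S])
    fix i
    show "mu_q N n q alpha (s i) > 0" "mu_eq N n q alpha (s i) (mu_q N n q alpha (s i))"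
      using mu_q_root[OF q a Npos sample_cov_eigenvalues_nonneg[OF V S]] by auto
  qed
  have "((\<lambda>s. mu_q N n q alpha s / s) \<longlongrightarrow> real n / N) at_top"
    using bounds(2,3) by (intro ratio_tendsto_at_top[where c = "alpha * (real q / N) powr (1 / real q)"])
      (auto simp: less_imp_le)
  with MAP show ?thesis
    using mu_eq_unique_root[OF q a Npos _ mu_zero_root[OF q a Npos]] mu_q_zero[OF q a Npos]
      bounds(1,3) by (intro conjI) (use in blast)+
qed

end
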